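(* Let $\mathcal{A}$ be a set of $\mathfrak{c}$ many Turing degrees. Then there is $\mathcal{S}\subseteq\mathcal{A}$ with $|\mathcal{S}|=\mathfrak{c}$ such that $\mathbb{R}_{\mathcal{S}}$ has the following property: for every collection of $\mathfrak{c}$ many pairwise disjoint pairs $(x,y)$ of elements of $\mathbb{R}_{\mathcal{S}}$ such that in each pair $x$ and $y$ have different Turing degrees, there are pairs $(x_1,y_1),(x_2,y_2)$ in the collection with $x_1<x_2$ and $y_1<y_2$, and pairs $(w_1,z_1),(w_2,z_2)$ in the collection with $w_1<w_2$ but $z_1>z_2$ (i.e. $\mathbb{R}_{\mathcal{S}}$ is layered $\mathfrak{c}$-$2$-entangled with respect to Turing degree).
   Context: $\mathfrak{c}=2^{\aleph_0}$. $\mathbb{R}_{\mathcal{S}}$ is the set of reals whose Turing degree lies in $\mathcal{S}$. A collection of pairs $\{(x_\alpha,y_\alpha)\}$ is pairwise disjoint if $x_\alpha\ne y_\alpha$ for all $\alpha$ and $\{x_\alpha,y_\alpha\}\cap\{x_\beta,y_\beta\}=\emptyset$ for $\alpha\neq\beta$. *)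

theory Defs
  imports Complex_Main "HOL-Library.Equipollence" "HOL-Library.Nat_Bijection"
begin

datatype recf = Zero | Succ | Proj nat | Orc | Comp recf "recf list"
  | PrimRec recf recf | Mu recf

definition arg :: "nat list \<Rightarrow> nat \<Rightarrow> nat" where
  "arg xs i = (if i < length xs then xs ! i else 0)"

inductive eval :: "nat set \<Rightarrow> recf \<Rightarrow> nat list \<Rightarrow> nat \<Rightarrow> bool" for A where
  eval_zero: "eval A Zero xs 0"
| eval_succ: "eval A Succ xs (Suc (arg xs 0))"
| eval_proj: "eval A (Proj i) xs (arg xs i)"
| eval_orc: "eval A Orc xs (if arg xs 0 \<in> A then 1 else 0)"
| eval_comp: "length ys = length gs \<Longrightarrow> (\<forall>i<length gs. eval A (gs ! i) xs (ys ! i))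
     \<Longrightarrow> eval A f ys z \<Longrightarrow> eval A (Comp f gs) xs z"
| eval_pr0: "eval A f xs y \<Longrightarrow> eval A (PrimRec f g) (0 # xs) y"
| eval_prS: "eval A (PrimRec f g) (n # xs) y \<Longrightarrow> eval A g (n # y # xs) z
     \<Longrightarrow> eval A (PrimRec f g) (Suc n # xs) z"
| eval_mu: "eval A f (n # xs) 0 \<Longrightarrow> (\<forall>m<n. \<exists>y. y > 0 \<and> eval A f (m # xs) y)
     \<Longrightarrow> eval A (Mu f) xs n"

definition turing_le :: "nat set \<Rightarrow> nat set \<Rightarrow> bool" where
  "turing_le B A \<longleftrightarrow> (\<exists>f. \<forall>n. eval A f [n] (if n \<in> B then 1 else 0))"

definition turing_equiv :: "nat set \<Rightarrow> nat set \<Rightarrow> bool" where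
  "turing_equiv A B \<longleftrightarrow> turing_le A B \<and> turing_le B A"

definition degree_of_set :: "nat set \<Rightarrow> nat set set" where
  "degree_of_set A = {B. turing_equiv B A}"

definition turing_degrees :: "nat set set set" where
  "turing_degrees = range degree_of_set"

text \<open>Explicit coding of rationals: n codes a / (b+1) where (a',b) = prod_decode n
  and a = int_decode a'.  A real x is identified with its (coded) left Dedekind cut.\<close>
definition rat_code :: "nat \<Rightarrow> real" where
  "rat_code n = (case prod_decode n of (a, b) \<Rightarrow> of_int (int_decode a) / real (Suc b))"

definition real_cut :: "real \<Rightarrow> nat set" where
  "real_cut x = {n. rat_code n < x}"

definition tdeg :: "real \<Rightarrow> nat set set" where
  "tdeg x = degree_of_set (real_cut x)"

definition reals_of_degrees :: "nat set set set \<Rightarrow> real set" where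
  "reals_of_degrees S = {x. tdeg x \<in> S}"

end

theory Submission
  imports Defs "HOL-Library.Countable" "HOL-Analysis.Elementary_Metric_Spaces"
begin

text \<open>Well-order the reals so that every proper initial segment has fewer than continuum many
  elements, and use this order to index, with repetitions, all codes: sequences of points of the
  plane together with a direction.  A code \<open>(q, s)\<close> stands for the map sending \<open>y\<close> to the
  supremum of those first coordinates of the points of \<open>q\<close> whose second coordinate lies before
  \<open>y\<close> in direction \<open>s\<close>.  By transfinite recursion choose degrees \<open>D \<alpha> \<in> \<A>\<close> different from all
  earlier ones and from the degree of every image, under an earlier code, of a real whose degree
  is an earlier \<open>D \<delta>\<close>.  Fewer than continuum many degrees are excluded at each stage, because a
  Turing degree contains only countably many reals.

  Suppose continuum many disjoint pairs with distinct degrees in \<open>\<S> = range D\<close> were all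
  increasing or all decreasing.  Approximating from the left by a countable subfamily, one code
  recovers \<open>x\<close> from \<open>y\<close> and another recovers \<open>y\<close> from \<open>x\<close>, except on countably many pairs.  Only
  fewer than continuum many pairs have both degree indices below those of the two codes; in any
  other pair, the coordinate whose degree has the larger index is the image of the other
  coordinate under an earlier code, contradicting the choice of that degree.\<close>

section \<open>Reals of a given Turing degree\<close>

instance recf :: countable by countable_datatype

lemma eval_deterministic: "eval A f xs y \<Longrightarrow> eval A f xs y' \<Longrightarrow> y = y'"
proof (induction arbitrary: y' rule: eval.induct)
  case (eval_comp ys gs xs f z)
  from eval_comp.prems obtain ys' where ys': "length ys' = length gs"
    "\<forall>i<length gs. eval A (gs ! i) xs (ys' ! i)" "eval A f ys' y'"
    by (cases rule: eval.cases) auto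
  have "ys = ys'" using eval_comp ys' by (intro nth_equalityI) auto
  then show ?case using eval_comp.IH ys' by auto
next
  case (eval_pr0 f xs y g)
  from eval_pr0.prems show ?case by (cases rule: eval.cases) (auto simp: eval_pr0.IH)
next
  case (eval_prS f g n xs y z)
  from eval_prS.prems obtain y2 where "eval A (PrimRec f g) (n # xs) y2" "eval A g (n # y2 # xs) y'"
    by (cases rule: eval.cases) auto
  then show ?case using eval_prS.IH by metis
next
  case (eval_mu f n xs)
  from eval_mu.prems have zero: "eval A f (y' # xs) 0"
    and pos: "\<forall>m<y'. \<exists>y. y > 0 \<and> eval A f (m # xs) y"
    by (cases rule: eval.cases; auto)+
  show ?case
  proof (rule linorder_cases)
    assume "n < y'"
    then obtain y where "y > 0" "eval A f (n # xs) y" using pos by blast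
    then show ?thesis using eval_mu.IH(1) by fastforce
  next
    assume "y' < n"
    then show ?thesis using eval_mu.IH(2) zero by fastforce
  qed
qed (auto elim: eval.cases)

lemma turing_le_refl: "turing_le X X"
proof -
  have "eval X Orc [n] (if n \<in> X then 1 else 0)" for n
    using eval_orc[of X "[n]"] by (simp add: arg_def)
  then show ?thesis unfolding turing_le_def by blast
qed

lemma countable_turing_le: "countable {B. turing_le B X}"
proof -
  have "{B. turing_le B X} \<subseteq> range (\<lambda>f. {n. eval X f [n] 1})"
  proof
    fix B assume "B \<in> {B. turing_le B X}"
    then obtain f where f: "\<And>n. eval X f [n] (if n \<in> B then 1 else 0)"
      unfolding turing_le_def by blast
    have "n \<in> B \<longleftrightarrow> eval X f [n] 1" for n
    proof
      show "n \<in> B \<Longrightarrow> eval X f [n] 1" using f[of n] by simp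
    next
      assume "eval X f [n] 1"
      then have "(if n \<in> B then 1 else 0) = (1::nat)" by (rule eval_deterministic[OF f])
      then show "n \<in> B" by (simp split: if_split_asm)
    qed
    then have "B = {n. eval X f [n] 1}" by blast
    then show "B \<in> range (\<lambda>f. {n. eval X f [n] 1})" by blast
  qed
  then show ?thesis by (rule countable_subset) simp
qed

lemma of_rat_in_range_rat_code: "real_of_rat q \<in> range rat_code"
proof -
  obtain a b where ab: "quotient_of q = (a, b)" by (cases "quotient_of q")
  have "b > 0" using quotient_of_denom_pos[OF ab] .
  then have "rat_code (prod_encode (int_encode a, nat b - 1)) = of_int a / of_int b"
    by (simp add: rat_code_def of_nat_diff)
  also have "\<dots> = real_of_rat q" by (simp add: quotient_of_div[OF ab] of_rat_divide)
  finally show ?thesis by (metis rangeI)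
qed

lemma inj_real_cut: "inj real_cut"
proof -
  have separate: "real_cut x \<noteq> real_cut y" if lt: "x < y" for x y :: real
  proof -
    obtain q where q: "x < real_of_rat q" "real_of_rat q < y" using of_rat_dense[OF lt] by blast
    obtain n where "rat_code n = real_of_rat q" using of_rat_in_range_rat_code by (metis rangeE)
    then have "n \<notin> real_cut x" "n \<in> real_cut y" using q by (simp_all add: real_cut_def)
    then show ?thesis by blast
  qed
  show ?thesis by (rule injI) (metis separate linorder_neqE)
qed

lemma countable_tdeg_fibre:
  assumes "d \<in> turing_degrees"
  shows "countable {x. tdeg x = d}"
proof -
  obtain X where d: "d = degree_of_set X" using assms unfolding turing_degrees_def by auto
  have "real_cut ` {x. tdeg x = d} \<subseteq> {B. turing_le B X}"
    using turing_le_refl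
    by (auto simp: d tdeg_def degree_of_set_def turing_equiv_def)
  then have "countable (real_cut ` {x. tdeg x = d})" using countable_turing_le countable_subset by blast
  then show ?thesis by (rule countable_image_inj_on) (rule inj_on_subset[OF inj_real_cut subset_UNIV])
qed

section \<open>Sets smaller than the continuum\<close>

unbundle cardinal_syntax

definition small :: "'a set \<Rightarrow> bool" where
  "small X \<longleftrightarrow> |X| <o |UNIV :: real set|"

lemma small_iff_not_lepoll: "small X \<longleftrightarrow> \<not> (UNIV :: real set) \<lesssim> X"
  unfolding small_def lepoll_def by (simp add: card_of_ordLess[symmetric])

lemma small_lepoll: "Y \<lesssim> X \<Longrightarrow> small X \<Longrightarrow> small Y"
  unfolding small_iff_not_lepoll using lepoll_trans by blast

lemma small_subset: "Y \<subseteq> X \<Longrightarrow> small X \<Longrightarrow> small Y"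
  by (rule small_lepoll[OF subset_imp_lepoll])

lemma small_image: "small X \<Longrightarrow> small (f ` X)"
  by (rule small_lepoll[OF image_lepoll])

lemma countable_small: "countable X \<Longrightarrow> small X"
  unfolding small_iff_not_lepoll using countable_lepoll uncountable_UNIV_real by blast

lemma not_small_if_eqpoll: "X \<approx> (UNIV :: real set) \<Longrightarrow> \<not> small X"
  unfolding small_iff_not_lepoll by (simp add: eqpoll_imp_lepoll eqpoll_sym)

lemma small_Un: "small X \<Longrightarrow> small Y \<Longrightarrow> small (X \<union> Y)"
  unfolding small_def
  using card_of_Un_ordLess_infinite uncountable_UNIV_real countable_finite by blast

lemma small_Times_if_ordLeq:
  assumes "|X| \<le>o |Y|" "small Y"
  shows "small (X \<times> Y)"
proof (cases "finite Y")
  case True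
  then have "finite X" using assms(1) card_of_ordLeq_finite by blast
  then show ?thesis using True by (simp add: countable_small countable_finite)
next
  case False
  then have "|X \<times> Y| \<le>o |Y|"
    using assms(1) card_of_Card_order
    by (intro card_of_Times_ordLeq_infinite_Field) (simp_all add: Field_card_of card_of_mono1)
  then show ?thesis using assms(2) unfolding small_def using ordLeq_ordLess_trans by blast
qed

lemma small_Times:
  assumes "small X" "small Y"
  shows "small (X \<times> Y)"
proof (cases "|X| \<le>o |Y|")
  case True
  then show ?thesis using assms(2) by (rule small_Times_if_ordLeq)
next
  case False
  then have "|Y| \<le>o |X|" using ordLeq_total[OF card_of_Well_order card_of_Well_order] by blast
  then have "small (Y \<times> X)" using assms(1) by (rule small_Times_if_ordLeq)
  then show ?thesis using small_lepoll[OF eqpoll_imp_lepoll[OF times_commute_eqpoll]] by blast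
qed

lemma small_UN_countable:
  assumes "small I" "\<And>i. i \<in> I \<Longrightarrow> countable (F i)"
  shows "small (\<Union>i\<in>I. F i)"
proof -
  have "(\<Union>i\<in>I. F i) \<subseteq> (\<lambda>(i, n). from_nat_into (F i) n) ` (I \<times> UNIV)"
    using assms(2) by (force dest: from_nat_into_surj)
  moreover have "small (I \<times> (UNIV :: nat set))"
    using small_Times[OF assms(1) countable_small[of "UNIV :: nat set"]] by simp
  ultimately show ?thesis using small_image small_subset by blast
qed

abbreviation continuum_order :: "real rel" where
  "continuum_order \<equiv> |UNIV :: real set|"

lemma wo_rel_continuum_order: "wo_rel continuum_order"
  by (simp add: wo_rel_def card_of_Well_order)

lemma small_underS_continuum_order: "small (underS continuum_order a)"
  unfolding small_def by (rule card_of_underS) (simp_all add: Field_card_of card_of_card_order_on)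

lemma small_under_continuum_order: "small (under continuum_order a)"
proof -
  have "under continuum_order a \<subseteq> underS continuum_order a \<union> {a}"
    by (auto simp: under_def underS_def)
  then show ?thesis
    by (rule small_subset[OF _ small_Un[OF small_underS_continuum_order countable_small]]) simp
qed

lemma continuum_order_cases:
  "a \<noteq> b \<Longrightarrow> a \<in> underS continuum_order b \<or> b \<in> underS continuum_order a"
  using wo_rel.TOTALS[OF wo_rel_continuum_order] by (auto simp: underS_def Field_card_of)

lemma underS_if_not_under:
  "(b, c) \<in> continuum_order \<Longrightarrow> a \<notin> under continuum_order c \<Longrightarrow> b \<in> underS continuum_order a"
proof -
  assume "(b, c) \<in> continuum_order" "a \<notin> under continuum_order c"
  moreover have "(c, a) \<in> continuum_order \<or> (a, c) \<in> continuum_order"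
    using wo_rel.TOTALS[OF wo_rel_continuum_order] by (simp add: Field_card_of)
  ultimately show ?thesis
    using wo_rel.TRANS[OF wo_rel_continuum_order] by (auto simp: under_def underS_def trans_def)
qed

lemma under_continuum_order_trans:
  "a \<in> under continuum_order b \<Longrightarrow> b \<in> under continuum_order c \<Longrightarrow> a \<in> under continuum_order c"
  using wo_rel.TRANS[OF wo_rel_continuum_order] by (auto simp: under_def trans_def)

section \<open>Transfinite diagonalisation\<close>

lemma continuum_recursion_avoiding:
  assumes "\<not> small A"
    and small_X: "\<And>g a. small (X g a)"
    and X_cong: "\<And>g g' a. (\<And>b. b \<in> underS continuum_order a \<Longrightarrow> g b = g' b) \<Longrightarrow> X g a = X g' a"
  obtains D where "\<And>a. D a \<in> A - X D a"
proof -
  define H where "H g a = (SOME d. d \<in> A - X g a)" for g a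
  have H: "H g a \<in> A - X g a" for g a
  proof -
    have "\<not> A \<subseteq> X g a" using assms(1) small_X small_subset by blast
    then have "\<exists>d. d \<in> A - X g a" by blast
    then show ?thesis unfolding H_def by (rule someI_ex)
  qed
  have "wo_rel.adm_wo continuum_order H"
    unfolding wo_rel.adm_wo_def[OF wo_rel_continuum_order] H_def using X_cong by metis
  then have "wo_rel.worec continuum_order H = H (wo_rel.worec continuum_order H)"
    by (rule wo_rel.worec_fixpoint[OF wo_rel_continuum_order])
  then show thesis using that H by metis
qed

lemma continuum_diagonal_sequence:
  fixes deg :: "'a \<Rightarrow> 'd" and \<phi> :: "real \<Rightarrow> 'a \<Rightarrow> 'a"
  assumes fibres: "\<And>d. d \<in> A \<Longrightarrow> countable {x. deg x = d}" and "\<not> small A"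
  obtains D :: "real \<Rightarrow> 'd"
  where "\<And>a. D a \<in> A"
    and "\<And>a b. b \<in> underS continuum_order a \<Longrightarrow> D b \<noteq> D a"
    and "\<And>a b \<delta> x. b \<in> underS continuum_order a \<Longrightarrow> \<delta> \<in> underS continuum_order a \<Longrightarrow>
           deg x = D \<delta> \<Longrightarrow> deg (\<phi> b x) \<noteq> D a"
proof -
  define X where "X g a = g ` underS continuum_order a \<union>
      (\<lambda>(b, x). deg (\<phi> b x)) ` (underS continuum_order a \<times> {x. deg x \<in> g ` underS continuum_order a \<inter> A})"
    for g :: "real \<Rightarrow> 'd" and a
  have small_X: "small (X g a)" for g a
  proof -
    have "small (g ` underS continuum_order a)"
      by (intro small_image small_underS_continuum_order)
    moreover have "{x. deg x \<in> g ` underS continuum_order a \<inter> A} =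
        (\<Union>d\<in>g ` underS continuum_order a \<inter> A. {x. deg x = d})" by auto
    ultimately have "small {x. deg x \<in> g ` underS continuum_order a \<inter> A}"
      using fibres small_subset small_UN_countable[of "g ` underS continuum_order a \<inter> A"]
      by (metis (no_types, lifting) Int_iff inf_le1)
    with \<open>small (g ` underS continuum_order a)\<close> show ?thesis
      unfolding X_def by (intro small_Un small_image small_Times small_underS_continuum_order)
  qed
  have X_cong: "X g a = X g' a" if "\<And>b. b \<in> underS continuum_order a \<Longrightarrow> g b = g' b" for g g' a
    unfolding X_def using that by (simp cong: image_cong)
  obtain D where D: "\<And>a. D a \<in> A - X D a"
    using continuum_recursion_avoiding[of A X, OF assms(2) small_X X_cong] by blast
  show thesis
  proof (rule that)
    show "D a \<in> A" for a using D by blast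
    show "D b \<noteq> D a" if "b \<in> underS continuum_order a" for a b
    proof -
      have "D b \<in> X D a" unfolding X_def using that by blast
      then show ?thesis using D[of a] by auto
    qed
    show "deg (\<phi> b x) \<noteq> D a"
      if "b \<in> underS continuum_order a" "\<delta> \<in> underS continuum_order a" "deg x = D \<delta>" for a b \<delta> x
    proof -
      have "(b, x) \<in> underS continuum_order a \<times> {x. deg x \<in> D ` underS continuum_order a \<inter> A}"
        using that D[of \<delta>] by auto
      then have "deg (\<phi> b x) \<in> X D a" unfolding X_def by (intro UnI2 image_eqI[of _ _ "(b, x)"]) simp_all
      then show ?thesis using D[of a] by auto
    qed
  qed
qed

definition mutual_pairs :: "('a \<Rightarrow> 'd) \<Rightarrow> 'd set \<Rightarrow> ('a \<Rightarrow> 'a) \<Rightarrow> ('a \<Rightarrow> 'a) \<Rightarrow> ('a \<times> 'a) set" where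
  "mutual_pairs deg S f g =
     {(x, y). deg x \<in> S \<and> deg y \<in> S \<and> deg x \<noteq> deg y \<and> x = f y \<and> y = g x}"

lemma mem_mutual_pairs:
  "(x, y) \<in> mutual_pairs deg S f g \<longleftrightarrow>
     deg x \<in> S \<and> deg y \<in> S \<and> deg x \<noteq> deg y \<and> x = f y \<and> y = g x"
  by (simp add: mutual_pairs_def)

lemma mutual_pairs_below_max_index:
  fixes D :: "real \<Rightarrow> 'd" and \<phi> :: "real \<Rightarrow> 'a \<Rightarrow> 'a"
  assumes D_avoids: "\<And>a b \<delta> x. b \<in> underS continuum_order a \<Longrightarrow> \<delta> \<in> underS continuum_order a \<Longrightarrow>
           deg x = D \<delta> \<Longrightarrow> deg (\<phi> b x) \<noteq> D a"
    and bm: "(b, m) \<in> continuum_order" and cm: "(c, m) \<in> continuum_order"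
  shows "mutual_pairs deg (range D) (\<phi> b) (\<phi> c) \<subseteq>
    (\<lambda>x. (x, \<phi> c x)) ` (\<Union>d\<in>D ` under continuum_order m. {x. deg x = d})"
proof safe
  fix x y assume "(x, y) \<in> mutual_pairs deg (range D) (\<phi> b) (\<phi> c)"
  then have "deg x \<in> range D \<and> deg y \<in> range D \<and> deg x \<noteq> deg y \<and> x = \<phi> b y \<and> y = \<phi> c x"
    unfolding mem_mutual_pairs .
  then have degs: "deg x \<in> range D" "deg y \<in> range D" "deg x \<noteq> deg y"
    and x: "x = \<phi> b y" and y: "y = \<phi> c x"
    by blast+
  from degs obtain \<gamma> \<delta> where xy: "deg x = D \<gamma>" "deg y = D \<delta>" "\<gamma> \<noteq> \<delta>" by (metis rangeE)
  txt \<open>Otherwise the coordinate of larger degree index would be the image of the other one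
    under an earlier code.\<close>
  have "\<gamma> \<in> under continuum_order m"
  proof (rule ccontr)
    assume \<gamma>: "\<gamma> \<notin> under continuum_order m"
    consider "\<delta> \<in> underS continuum_order \<gamma>" | "\<gamma> \<in> underS continuum_order \<delta>"
      using continuum_order_cases xy(3) by blast
    then show False
    proof cases
      case 1
      then show False using D_avoids[OF underS_if_not_under[OF bm \<gamma>] 1 xy(2)] x xy(1) by simp
    next
      case 2
      then have "\<delta> \<notin> under continuum_order m"
        using \<gamma> under_continuum_order_trans[OF subsetD[OF underS_subset_under 2]] by blast
      then show False using D_avoids[OF underS_if_not_under[OF cm] 2 xy(1)] y xy(2) by simp
    qed
  qed
  then show "(x, y) \<in> (\<lambda>x. (x, \<phi> c x)) ` (\<Union>d\<in>D ` under continuum_order m. {x. deg x = d})"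
    using xy(1) y by blast
qed

lemma exists_degrees_small_mutual_pairs:
  fixes deg :: "'a \<Rightarrow> 'd" and \<phi> :: "real \<Rightarrow> 'a \<Rightarrow> 'a"
  assumes fibres: "\<And>d. d \<in> A \<Longrightarrow> countable {x. deg x = d}" and "A \<approx> (UNIV :: real set)"
  shows "\<exists>S\<subseteq>A. S \<approx> (UNIV :: real set) \<and> (\<forall>b c. small (mutual_pairs deg S (\<phi> b) (\<phi> c)))"
proof -
  obtain D :: "real \<Rightarrow> 'd" where D_in: "\<And>a. D a \<in> A"
    and D_new: "\<And>a b. b \<in> underS continuum_order a \<Longrightarrow> D b \<noteq> D a"
    and D_avoids: "\<And>a b \<delta> x. b \<in> underS continuum_order a \<Longrightarrow> \<delta> \<in> underS continuum_order a \<Longrightarrow>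
           deg x = D \<delta> \<Longrightarrow> deg (\<phi> b x) \<noteq> D a"
    using continuum_diagonal_sequence[OF fibres not_small_if_eqpoll[OF assms(2)], where \<phi> = \<phi>]
    by blast
  have "inj D"
  proof (rule injI, rule ccontr)
    fix a b assume eq: "D a = D b" and "a \<noteq> b"
    then consider "a \<in> underS continuum_order b" | "b \<in> underS continuum_order a"
      using continuum_order_cases by blast
    then show False using D_new eq by cases metis+
  qed
  have "small (mutual_pairs deg (range D) (\<phi> b) (\<phi> c))" for b c
  proof -
    define m where "m = wo_rel.max2 continuum_order b c"
    have bm: "(b, m) \<in> continuum_order" and cm: "(c, m) \<in> continuum_order"
      using wo_rel.max2_greater[OF wo_rel_continuum_order] by (simp_all add: m_def Field_card_of)
    have "small (\<Union>d\<in>D ` under continuum_order m. {x. deg x = d})"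
      using D_in fibres by (intro small_UN_countable small_image small_under_continuum_order) auto
    moreover have "mutual_pairs deg (range D) (\<phi> b) (\<phi> c) \<subseteq>
        (\<lambda>x. (x, \<phi> c x)) ` (\<Union>d\<in>D ` under continuum_order m. {x. deg x = d})"
      using D_avoids bm cm by (rule mutual_pairs_below_max_index)
    ultimately show ?thesis using small_image small_subset by blast
  qed
  moreover have "range D \<approx> (UNIV :: real set)" using \<open>inj D\<close> by (rule inj_on_image_eqpoll_self)
  ultimately show ?thesis using D_in by blast
qed

section \<open>Monotone families of pairs\<close>

definition dir_less :: "bool \<Rightarrow> real \<Rightarrow> real \<Rightarrow> bool" where
  "dir_less s a b \<longleftrightarrow> (if s then a < b else b < a)"

definition mono_pairs :: "bool \<Rightarrow> (real \<times> real) set \<Rightarrow> bool" where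
  "mono_pairs s P \<longleftrightarrow> (\<forall>p\<in>P. \<forall>q\<in>P. fst p < fst q \<longrightarrow> dir_less s (snd p) (snd q))"

definition sup_code :: "(nat \<Rightarrow> real \<times> real) \<Rightarrow> bool \<Rightarrow> real \<Rightarrow> real" where
  "sup_code q s y = Sup {fst (q n) |n. dir_less s (snd (q n)) y}"

lemma dir_less_iff_fst_less:
  assumes "mono_pairs s P" "inj_on fst P" "p \<in> P" "q \<in> P"
  shows "dir_less s (snd p) (snd q) \<longleftrightarrow> fst p < fst q"
proof
  assume dir: "dir_less s (snd p) (snd q)"
  show "fst p < fst q"
  proof (rule ccontr)
    assume "\<not> fst p < fst q"
    then consider "fst p = fst q" | "fst q < fst p" by linarith
    then show False
    proof cases
      case 1
      then have "p = q" using inj_onD[OF assms(2) _ assms(3,4)] by blast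
      then show False using dir by (simp add: dir_less_def)
    next
      case 2
      then have "dir_less s (snd q) (snd p)" using assms(1,3,4) by (simp add: mono_pairs_def)
      then show False using dir by (auto simp: dir_less_def split: if_splits)
    qed
  qed
qed (use assms in \<open>simp add: mono_pairs_def\<close>)

lemma mono_pairs_swap:
  assumes "mono_pairs s P" "inj_on fst P"
  shows "mono_pairs s (prod.swap ` P)"
  unfolding mono_pairs_def
proof (intro ballI impI)
  fix p' q' assume "p' \<in> prod.swap ` P" "q' \<in> prod.swap ` P" "fst p' < fst q'"
  then obtain p q where pq: "p \<in> P" "q \<in> P" "p' = prod.swap p" "q' = prod.swap q" "snd p < snd q"
    by auto
  show "dir_less s (snd p') (snd q')"
    using pq dir_less_iff_fst_less[OF assms pq(1,2)] dir_less_iff_fst_less[OF assms pq(2,1)]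
    by (cases s) (auto simp: dir_less_def)
qed

lemma islimpt_below_iff:
  fixes x :: real
  shows "x islimpt {d\<in>D. d < x} \<longleftrightarrow> (\<forall>e>0. \<exists>d\<in>D. x - e < d \<and> d < x)"
  unfolding islimpt_approachable_real by (force simp: abs_if)

lemma countable_not_islimpt_below:
  fixes X :: "real set"
  shows "countable {x\<in>X. \<not> x islimpt {d\<in>X. d < x}}"
proof -
  have "{x\<in>X. \<not> x islimpt {d\<in>X. d < x}} \<subseteq> range (\<lambda>q. Inf {d\<in>X. real_of_rat q < d})"
  proof
    fix x assume "x \<in> {x\<in>X. \<not> x islimpt {d\<in>X. d < x}}"
    then obtain e where "x \<in> X" "e > 0" and gap: "\<forall>d\<in>X. \<not> (x - e < d \<and> d < x)"
      unfolding islimpt_below_iff by blast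
    obtain q where q: "x - e < real_of_rat q" "real_of_rat q < x"
      using of_rat_dense[of "x - e" x] \<open>e > 0\<close> by auto
    have "Inf {d\<in>X. real_of_rat q < d} = x"
      using \<open>x \<in> X\<close> q gap by (intro cInf_eq_minimum) (auto simp: not_less)
    then show "x \<in> range (\<lambda>q. Inf {d\<in>X. real_of_rat q < d})" by (rule range_eqI[OF sym])
  qed
  then show ?thesis by (rule countable_subset) (rule countable_image[OF countableI_type])
qed

lemma countable_subset_dense_below:
  fixes X :: "real set"
  obtains D where "D \<subseteq> X" "countable D" "countable {x\<in>X. \<not> x islimpt {d\<in>D. d < x}}"
proof -
  define between where "between ab = {d\<in>X. real_of_rat (fst ab) < d \<and> d < real_of_rat (snd ab)}"
    for ab :: "rat \<times> rat"
  define D where "D = (\<lambda>ab. SOME d. d \<in> between ab) ` {ab. between ab \<noteq> {}}"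
  have D_between: "\<exists>d\<in>D. d \<in> between ab" if "between ab \<noteq> {}" for ab
    using that unfolding D_def by (metis (mono_tags) ex_in_conv image_eqI mem_Collect_eq someI)
  have "D \<subseteq> X" unfolding D_def between_def by (auto intro: someI2_ex)
  moreover have "countable D" unfolding D_def by simp
  moreover have "x islimpt {d\<in>D. d < x}" if lim: "x islimpt {d\<in>X. d < x}" for x
    unfolding islimpt_below_iff
  proof (intro allI impI)
    fix e :: real assume "e > 0"
    then obtain d where d: "d \<in> X" "x - e < d" "d < x" using lim unfolding islimpt_below_iff by blast
    obtain a where a: "x - e < real_of_rat a" "real_of_rat a < d" using of_rat_dense d(2) by blast
    obtain b where b: "d < real_of_rat b" "real_of_rat b < x" using of_rat_dense d(3) by blast
    have "d \<in> between (a, b)" using d a b by (simp add: between_def)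
    then obtain d' where "d' \<in> D" "d' \<in> between (a, b)" using D_between by blast
    then show "\<exists>d\<in>D. x - e < d \<and> d < x" using a b by (intro bexI[of _ d']) (auto simp: between_def)
  qed
  then have "{x\<in>X. \<not> x islimpt {d\<in>D. d < x}} \<subseteq> {x\<in>X. \<not> x islimpt {d\<in>X. d < x}}" by blast
  then have "countable {x\<in>X. \<not> x islimpt {d\<in>D. d < x}}"
    using countable_not_islimpt_below countable_subset by blast
  ultimately show thesis using that by blast
qed

lemma Sup_below_islimpt:
  fixes x :: real
  assumes "x islimpt {d\<in>D. d < x}"
  shows "Sup {d\<in>D. d < x} = x"
proof (rule cSup_eq_non_empty)
  show "{d\<in>D. d < x} \<noteq> {}" using assms islimpt_EMPTY by fastforce
  show "d \<le> x" if "d \<in> {d\<in>D. d < x}" for d using that by simp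
  show "x \<le> y" if "\<And>d. d \<in> {d\<in>D. d < x} \<Longrightarrow> d \<le> y" for y
  proof (rule ccontr)
    assume "\<not> x \<le> y"
    then have "x - y > 0" by simp
    then obtain d where "d \<in> D" "x - (x - y) < d" "d < x"
      using assms unfolding islimpt_below_iff by blast
    then show False using that[of d] by simp
  qed
qed

lemma countable_inj_on_preimage:
  "inj_on f A \<Longrightarrow> countable B \<Longrightarrow> countable {x\<in>A. f x \<in> B}"
  by (rule countable_image_inj_on[OF countable_subset]) (auto intro: inj_on_subset)

lemma mono_pairs_sup_code:
  assumes mono: "mono_pairs s P" and inj: "inj_on fst P"
  obtains q where "countable {p\<in>P. fst p \<noteq> sup_code q s (snd p)}"
proof -
  obtain D where D: "D \<subseteq> fst ` P" "countable D"
    and bad: "countable {x\<in>fst ` P. \<not> x islimpt {d\<in>D. d < x}}"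
    using countable_subset_dense_below by blast
  define C where "C = {c\<in>P. fst c \<in> D}"
  have "countable C" unfolding C_def using inj D(2) by (rule countable_inj_on_preimage)
  define q where "q = from_nat_into C"
  have "fst p = sup_code q s (snd p)" if p: "p \<in> P" and lim: "fst p islimpt {d\<in>D. d < fst p}" for p
  proof -
    have "{d\<in>D. d < fst p} \<noteq> {}" using lim islimpt_EMPTY by fastforce
    then have "C \<noteq> {}" using D(1) unfolding C_def by fastforce
    then have range_q: "range q = C" unfolding q_def using \<open>countable C\<close> by (rule range_from_nat_into)
    have "{fst (q n) |n. dir_less s (snd (q n)) (snd p)} = fst ` {c\<in>C. dir_less s (snd c) (snd p)}"
      unfolding range_q[symmetric] by blast
    also have "\<dots> = fst ` {c\<in>C. fst c < fst p}"
      using dir_less_iff_fst_less[OF mono inj _ p] unfolding C_def by blast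
    also have "\<dots> = {d\<in>D. d < fst p}" using D(1) unfolding C_def by force
    finally show ?thesis unfolding sup_code_def using Sup_below_islimpt[OF lim] by simp
  qed
  then have "{p\<in>P. fst p \<noteq> sup_code q s (snd p)} \<subseteq> {p\<in>P. fst p \<in> {x\<in>fst ` P. \<not> x islimpt {d\<in>D. d < x}}}"
    by auto
  moreover have "countable {p\<in>P. fst p \<in> {x\<in>fst ` P. \<not> x islimpt {d\<in>D. d < x}}}"
    using inj bad by (rule countable_inj_on_preimage)
  ultimately show thesis by (rule that[OF countable_subset])
qed

lemma mono_pairs_sup_codes:
  assumes mono: "mono_pairs s P" and inj: "inj_on fst P" "inj_on snd P"
  obtains q1 q2
  where "countable {p\<in>P. fst p \<noteq> sup_code q1 s (snd p) \<or> snd p \<noteq> sup_code q2 s (fst p)}"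
proof -
  obtain q1 where q1: "countable {p\<in>P. fst p \<noteq> sup_code q1 s (snd p)}"
    using mono_pairs_sup_code[OF mono inj(1)] by blast
  have "inj_on fst (prod.swap ` P)" using inj(2) by (auto simp: inj_on_def)
  then obtain q2 where "countable {p\<in>prod.swap ` P. fst p \<noteq> sup_code q2 s (snd p)}"
    using mono_pairs_sup_code[OF mono_pairs_swap[OF mono inj(1)]] by blast
  then have "countable (prod.swap ` {p\<in>prod.swap ` P. fst p \<noteq> sup_code q2 s (snd p)})" by simp
  moreover have "prod.swap ` {p\<in>prod.swap ` P. fst p \<noteq> sup_code q2 s (snd p)} =
      {p\<in>P. snd p \<noteq> sup_code q2 s (fst p)}" by force
  ultimately have "countable {p\<in>P. snd p \<noteq> sup_code q2 s (fst p)}" by simp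
  with q1 have "countable ({p\<in>P. fst p \<noteq> sup_code q1 s (snd p)} \<union> {p\<in>P. snd p \<noteq> sup_code q2 s (fst p)})"
    by (rule countable_Un)
  moreover have "{p\<in>P. fst p \<noteq> sup_code q1 s (snd p) \<or> snd p \<noteq> sup_code q2 s (fst p)} \<subseteq>
      {p\<in>P. fst p \<noteq> sup_code q1 s (snd p)} \<union> {p\<in>P. snd p \<noteq> sup_code q2 s (fst p)}" by blast
  ultimately show thesis by (rule that[OF countable_subset[rotated]])
qed

lemma small_if_mono_pairs:
  fixes \<phi> :: "real \<Rightarrow> real \<Rightarrow> real" and deg :: "real \<Rightarrow> 'd"
  assumes small_mutual: "\<And>b c. small (mutual_pairs deg S (\<phi> b) (\<phi> c))"
    and codes: "\<And>q s. sup_code q s \<in> range \<phi>"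
    and mono: "mono_pairs s P" and inj: "inj_on fst P" "inj_on snd P"
    and P: "\<And>x y. (x, y) \<in> P \<Longrightarrow> deg x \<in> S \<and> deg y \<in> S \<and> deg x \<noteq> deg y"
  shows "small P"
proof -
  obtain q1 q2 where E: "countable {p\<in>P. fst p \<noteq> sup_code q1 s (snd p) \<or> snd p \<noteq> sup_code q2 s (fst p)}"
    using mono_pairs_sup_codes[OF mono inj] by blast
  obtain b c where "\<phi> b = sup_code q1 s" "\<phi> c = sup_code q2 s" using codes by (metis rangeE)
  then have "P \<subseteq> {p\<in>P. fst p \<noteq> sup_code q1 s (snd p) \<or> snd p \<noteq> sup_code q2 s (fst p)} \<union>
      mutual_pairs deg S (\<phi> b) (\<phi> c)"
    using P by (auto simp: mem_mutual_pairs)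
  then show ?thesis using small_Un[OF countable_small[OF E] small_mutual] small_subset by blast
qed

lemma not_mono_pairsD:
  assumes "inj_on snd P" "\<not> mono_pairs s P"
  shows "\<exists>(x1, y1)\<in>P. \<exists>(x2, y2)\<in>P. x1 < x2 \<and> dir_less (\<not> s) y1 y2"
proof -
  obtain p q where pq: "p \<in> P" "q \<in> P" "fst p < fst q" "\<not> dir_less s (snd p) (snd q)"
    using assms(2) unfolding mono_pairs_def by blast
  then have "snd p \<noteq> snd q" using assms(1) by (auto simp: inj_on_def)
  then have "dir_less (\<not> s) (snd p) (snd q)" using pq(4) by (auto simp: dir_less_def)
  then show ?thesis using pq(1-3) by fastforce
qed

lemma increasing_and_decreasing_pairs:
  fixes \<phi> :: "real \<Rightarrow> real \<Rightarrow> real" and deg :: "real \<Rightarrow> 'd"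
  assumes small_mutual: "\<And>b c. small (mutual_pairs deg S (\<phi> b) (\<phi> c))"
    and codes: "\<And>q s. sup_code q s \<in> range \<phi>"
    and "\<not> small P"
    and degs: "\<And>x y. (x, y) \<in> P \<Longrightarrow> deg x \<in> S \<and> deg y \<in> S \<and> deg x \<noteq> deg y"
    and disjoint: "\<And>p q. p \<in> P \<Longrightarrow> q \<in> P \<Longrightarrow> p \<noteq> q \<Longrightarrow> {fst p, snd p} \<inter> {fst q, snd q} = {}"
  shows "(\<exists>(x1, y1)\<in>P. \<exists>(x2, y2)\<in>P. x1 < x2 \<and> y1 < y2) \<and>
    (\<exists>(w1, z1)\<in>P. \<exists>(w2, z2)\<in>P. w1 < w2 \<and> z2 < z1)"
proof -
  have inj: "inj_on fst P" "inj_on snd P" using disjoint unfolding inj_on_def by blast+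
  have "\<not> mono_pairs s P" for s
    using small_if_mono_pairs[OF small_mutual codes _ inj degs] \<open>\<not> small P\<close> by blast
  then show ?thesis
    using not_mono_pairsD[OF inj(2), of False] not_mono_pairsD[OF inj(2), of True]
    by (simp add: dir_less_def)
qed

lemma nat_funs_lepoll_reals: "(UNIV :: (nat \<Rightarrow> real) set) \<lesssim> (UNIV :: real set)"
proof -
  have "inj (\<lambda>f :: nat \<Rightarrow> real. real_cut \<circ> f)"
    using inj_real_cut by (auto simp: inj_def fun_eq_iff)
  then have "(UNIV :: (nat \<Rightarrow> real) set) \<lesssim> (UNIV :: (nat \<Rightarrow> nat set) set)"
    unfolding lepoll_def by blast
  also have "inj (\<lambda>F :: nat \<Rightarrow> nat set. {prod_encode (i, n) |i n. n \<in> F i})"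
  proof (rule injI)
    fix F G :: "nat \<Rightarrow> nat set"
    assume eq: "{prod_encode (i, n) |i n. n \<in> F i} = {prod_encode (i, n) |i n. n \<in> G i}"
    have mem: "prod_encode (i, n) \<in> {prod_encode (i, n) |i n. n \<in> H i} \<longleftrightarrow> n \<in> H i"
      for H :: "nat \<Rightarrow> nat set" and i n
      by (auto simp: prod_encode_eq)
    show "F = G" using mem[where H = F] mem[where H = G] eq by blast
  qed
  then have "(UNIV :: (nat \<Rightarrow> nat set) set) \<lesssim> (UNIV :: nat set set)"
    unfolding lepoll_def by blast
  also have "(UNIV :: nat set set) \<approx> (UNIV :: real set)" by (rule nat_sets_eqpoll_reals)
  finally show ?thesis .
qed

lemma codes_lepoll_reals: "(UNIV :: ((nat \<Rightarrow> real \<times> real) \<times> bool) set) \<lesssim> (UNIV :: real set)"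
proof -
  define interleave :: "(nat \<Rightarrow> real \<times> real) \<times> bool \<Rightarrow> nat \<Rightarrow> real" where
    "interleave t = case_nat (of_bool (snd t))
       (\<lambda>m. (if even m then fst else snd) (fst t (m div 2)))" for t
  have "inj interleave"
  proof (rule injI)
    fix t t' assume eq: "interleave t = interleave t'"
    have "snd t = snd t'"
      using fun_cong[OF eq, of 0] by (cases "snd t"; cases "snd t'") (simp_all add: interleave_def)
    moreover have "fst t k = fst t' k" for k
      using fun_cong[OF eq, of "Suc (2 * k)"] fun_cong[OF eq, of "Suc (Suc (2 * k))"]
      by (simp add: interleave_def prod_eq_iff)
    ultimately show "t = t'" by (simp add: prod_eq_iff fun_eq_iff)
  qed
  then have "(UNIV :: ((nat \<Rightarrow> real \<times> real) \<times> bool) set) \<lesssim> (UNIV :: (nat \<Rightarrow> real) set)"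
    unfolding lepoll_def by blast
  also have "\<dots> \<lesssim> (UNIV :: real set)" by (rule nat_funs_lepoll_reals)
  finally show ?thesis .
qed

lemma sup_codes_indexed_by_reals:
  obtains \<phi> :: "real \<Rightarrow> real \<Rightarrow> real" where "\<And>q s. sup_code q s \<in> range \<phi>"
proof -
  obtain j :: "(nat \<Rightarrow> real \<times> real) \<times> bool \<Rightarrow> real" where "inj j"
    using codes_lepoll_reals unfolding lepoll_def by blast
  have "sup_code q s \<in> range (\<lambda>r. case inv j r of (q, s) \<Rightarrow> sup_code q s)" for q s
  proof (rule range_eqI)
    show "sup_code q s = (case inv j (j (q, s)) of (q, s) \<Rightarrow> sup_code q s)" using \<open>inj j\<close> by simp
  qed
  then show thesis by (rule that)
qed

theorem mainTheorem10:
  fixes \<A> :: "nat set set set"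
  assumes "\<A> \<subseteq> turing_degrees"
    and "\<A> \<approx> (UNIV :: real set)"
  shows "\<exists>\<S> \<subseteq> \<A>. \<S> \<approx> (UNIV :: real set) \<and>
    (\<forall>P :: (real \<times> real) set.
        P \<subseteq> reals_of_degrees \<S> \<times> reals_of_degrees \<S>
      \<and> P \<approx> (UNIV :: real set)
      \<and> (\<forall>(x, y) \<in> P. x \<noteq> y \<and> tdeg x \<noteq> tdeg y)
      \<and> (\<forall>p \<in> P. \<forall>q \<in> P. p \<noteq> q \<longrightarrow> {fst p, snd p} \<inter> {fst q, snd q} = {})
      \<longrightarrow> (\<exists>(x1, y1) \<in> P. \<exists>(x2, y2) \<in> P. x1 < x2 \<and> y1 < y2)
        \<and> (\<exists>(w1, z1) \<in> P. \<exists>(w2, z2) \<in> P. w1 < w2 \<and> z1 > z2))"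
proof -
  obtain \<phi> :: "real \<Rightarrow> real \<Rightarrow> real" where codes: "\<And>q s. sup_code q s \<in> range \<phi>"
    using sup_codes_indexed_by_reals by blast
  have fibres: "countable {x. tdeg x = d}" if "d \<in> \<A>" for d
    using that assms(1) by (intro countable_tdeg_fibre) blast
  obtain \<S> where \<S>: "\<S> \<subseteq> \<A>" "\<S> \<approx> (UNIV :: real set)"
    and small_mutual: "\<And>b c. small (mutual_pairs tdeg \<S> (\<phi> b) (\<phi> c))"
    using exists_degrees_small_mutual_pairs[OF fibres assms(2), where \<phi> = \<phi>] by blast
  show ?thesis
    by (intro exI[of _ \<S>] conjI[OF \<S>(1)] conjI[OF \<S>(2)] allI impI, elim conjE,
        rule increasing_and_decreasing_pairs[OF small_mutual codes])
      (auto simp: reals_of_degrees_def dest: not_small_if_eqpoll)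
qed

end
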